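(* Let $\mathcal A$ be a finite nonempty alphabet, let $\omega\in\mathcal A^{\mathbb N}$ be uniformly recurrent, and let $u\in\mathcal A^+$ be a nonempty finite word. Then $\omega|_u$ is an IP-set if and only if $\omega|_u$ is a central set.
   Context: $\mathbb N=\{0,1,2,\dots\}$. For $\omega=\omega_0\omega_1\omega_2\cdots\in\mathcal A^{\mathbb N}$ and a nonempty finite word $u$, $\omega|_u=\{n\in\mathbb N : \omega_n\omega_{n+1}\cdots\omega_{n+|u|-1}=u\}$ (the set of occurrences of $u$). $\omega$ is uniformly recurrent if for every factor $u$ of $\omega$ the set $\omega|_u$ has bounded gaps. A set $A\subseteq\mathbb N$ is an IP-set if there is a sequence $x_0<x_1<x_2<\cdots$ of natural numbers with $\sum_{n\in F}x_n\in A$ for every nonempty finite $F\subseteq\mathbb N$. $\beta\mathbb N$ is the set of ultrafilters on $\mathbb N$ with addition defined by $A\in p+q$ iff $\{n\in\mathbb N: A-n\in p\}\in q$, where $A-n=\{m: m+n\in A\}$; this makes $\beta\mathbb N$ a compact left-topological semigroup with a smallest two-sided ideal $K(\beta\mathbb N)$. An idempotent is a non-principal ultrafilter $p$ with $p+p=p$; a minimal idempotent is an idempotent lying in $K(\beta\mathbb N)$. A set $A\subseteq\mathbb N$ is central if it belongs to some minimal idempotent. *)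

theory Defs
  imports Main
begin

definition occurrences :: "(nat \<Rightarrow> 'a) \<Rightarrow> 'a list \<Rightarrow> nat set" where
  "occurrences w u = {n. \<forall>i<length u. w (n + i) = u ! i}"

definition is_factor :: "(nat \<Rightarrow> 'a) \<Rightarrow> 'a list \<Rightarrow> bool" where
  "is_factor w u \<longleftrightarrow> u \<noteq> [] \<and> occurrences w u \<noteq> {}"

definition bounded_gaps :: "nat set \<Rightarrow> bool" where
  "bounded_gaps S \<longleftrightarrow> (\<exists>g. \<forall>n. \<exists>m\<in>S. n \<le> m \<and> m < n + g)"

definition uniformly_recurrent :: "(nat \<Rightarrow> 'a) \<Rightarrow> bool" where
  "uniformly_recurrent w \<longleftrightarrow> (\<forall>u. is_factor w u \<longrightarrow> bounded_gaps (occurrences w u))"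

definition IP_set :: "nat set \<Rightarrow> bool" where
  "IP_set A \<longleftrightarrow> (\<exists>x :: nat \<Rightarrow> nat. strict_mono x \<and>
      (\<forall>F. finite F \<and> F \<noteq> {} \<longrightarrow> (\<Sum>n\<in>F. x n) \<in> A))"

section \<open>The Stone-Cech compactification \<open>\<beta>\<nat>\<close> as ultrafilters on nat\<close>

definition is_ultrafilter :: "nat set set \<Rightarrow> bool" where
  "is_ultrafilter p \<longleftrightarrow>
     UNIV \<in> p \<and> {} \<notin> p \<and>
     (\<forall>A B. A \<in> p \<and> A \<subseteq> B \<longrightarrow> B \<in> p) \<and>
     (\<forall>A B. A \<in> p \<and> B \<in> p \<longrightarrow> A \<inter> B \<in> p) \<and>
     (\<forall>A. A \<in> p \<or> - A \<in> p)"

definition betaN :: "nat set set set" where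
  "betaN = {p. is_ultrafilter p}"

definition principal :: "nat set set \<Rightarrow> bool" where
  "principal p \<longleftrightarrow> (\<exists>n. {n} \<in> p)"

definition shift_set :: "nat set \<Rightarrow> nat \<Rightarrow> nat set" where
  "shift_set A n = {m. m + n \<in> A}"

definition uf_add :: "nat set set \<Rightarrow> nat set set \<Rightarrow> nat set set" (infixl "\<oplus>\<^sub>\<beta>" 65) where
  "p \<oplus>\<^sub>\<beta> q = {A. {n. shift_set A n \<in> p} \<in> q}"

definition two_sided_ideal :: "nat set set set \<Rightarrow> bool" where
  "two_sided_ideal I \<longleftrightarrow> I \<noteq> {} \<and> I \<subseteq> betaN \<and>
     (\<forall>p\<in>betaN. \<forall>q\<in>I. p \<oplus>\<^sub>\<beta> q \<in> I \<and> q \<oplus>\<^sub>\<beta> p \<in> I)"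

definition K_betaN :: "nat set set set" where
  "K_betaN = \<Inter> {I. two_sided_ideal I}"

definition idempotent :: "nat set set \<Rightarrow> bool" where
  "idempotent p \<longleftrightarrow> p \<in> betaN \<and> \<not> principal p \<and> p \<oplus>\<^sub>\<beta> p = p"

definition minimal_idempotent :: "nat set set \<Rightarrow> bool" where
  "minimal_idempotent p \<longleftrightarrow> idempotent p \<and> p \<in> K_betaN"

definition central :: "nat set \<Rightarrow> bool" where
  "central A \<longleftrightarrow> (\<exists>p. minimal_idempotent p \<and> A \<in> p)"

end

theory Submission
  imports Defs
begin

text \<open>
  For a nonprincipal idempotent ultrafilter \<open>p\<close>, every member of \<open>p\<close> is an IP-set (Galvin--Glazer),
  and every IP-set belongs to such an idempotent (apply Ellis--Numakura to the closed subsemigroup of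
  ultrafilters containing all tails \<open>FS(x\<^sub>m, x\<^sub>m\<^sub>+\<^sub>1, \<dots>)\<close>). So it suffices to replace an idempotent
  \<open>p \<ni> \<omega>|\<^sub>u\<close> by a minimal one. Membership of \<open>\<omega>|\<^sub>u\<close> in an ultrafilter \<open>q\<close> only depends on the
  point \<open>q-lim T\<^sup>n \<omega>\<close> of the orbit closure of \<open>\<omega>\<close>: it holds iff that point starts with \<open>u\<close>.
  Let \<open>y = p-lim T\<^sup>n \<omega>\<close>. Uniform recurrence makes the orbit closure minimal, so \<open>y\<close> is reached
  from every point; hence in a minimal right ideal \<open>R \<subseteq> p + \<beta>\<nat>\<close> the ultrafilters \<open>q\<close> with
  \<open>q-lim T\<^sup>n \<omega> = y = q-lim T\<^sup>n y\<close> form a nonempty closed subsemigroup. An idempotent in it is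
  minimal and contains \<open>\<omega>|\<^sub>u\<close>.
\<close>

section \<open>Ultrafilters on \<open>\<nat>\<close>\<close>

lemma uf_UNIV: "is_ultrafilter p \<Longrightarrow> UNIV \<in> p"
  by (simp add: is_ultrafilter_def)

lemma uf_empty: "is_ultrafilter p \<Longrightarrow> {} \<notin> p"
  by (simp add: is_ultrafilter_def)

lemma uf_nonempty: "is_ultrafilter p \<Longrightarrow> A \<in> p \<Longrightarrow> A \<noteq> {}"
  using uf_empty by blast

lemma uf_mono: "is_ultrafilter p \<Longrightarrow> A \<in> p \<Longrightarrow> A \<subseteq> B \<Longrightarrow> B \<in> p"
  unfolding is_ultrafilter_def by blast

lemma uf_Int: "is_ultrafilter p \<Longrightarrow> A \<inter> B \<in> p \<longleftrightarrow> A \<in> p \<and> B \<in> p"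
  unfolding is_ultrafilter_def by (meson Int_lower1 Int_lower2)

lemma uf_Compl: "is_ultrafilter p \<Longrightarrow> - A \<in> p \<longleftrightarrow> A \<notin> p"
  unfolding is_ultrafilter_def by (metis Compl_disjoint)

lemma uf_Un: "is_ultrafilter p \<Longrightarrow> A \<union> B \<in> p \<longleftrightarrow> A \<in> p \<or> B \<in> p"
  by (metis uf_Compl uf_Int compl_sup)

lemma uf_eq: "is_ultrafilter p \<Longrightarrow> is_ultrafilter q \<Longrightarrow> p \<subseteq> q \<Longrightarrow> p = q"
  using uf_Compl by blast

lemma uf_finite_UNION:
  assumes "is_ultrafilter p" "finite I" "(\<Union>i\<in>I. X i) \<in> p"
  shows "\<exists>i\<in>I. X i \<in> p"
  using assms(2,3)
  by (induction I rule: finite_induct) (auto simp: uf_empty[OF assms(1)] uf_Un[OF assms(1)])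

lemma uf_finite_INTER:
  assumes "is_ultrafilter p" "finite I" "\<forall>i\<in>I. X i \<in> p"
  shows "(\<Inter>i\<in>I. X i) \<in> p"
  using assms(2,3)
  by (induction I rule: finite_induct) (auto simp: uf_UNIV[OF assms(1)] uf_Int[OF assms(1)])

lemma nonprincipal_iff_tails:
  assumes p: "is_ultrafilter p"
  shows "\<not> principal p \<longleftrightarrow> (\<forall>m. {m..} \<in> p)"
proof
  assume np: "\<not> principal p"
  show "\<forall>m. {m..} \<in> p"
  proof
    fix m
    have "(\<Union>i\<in>{..<m}. {i}) \<notin> p"
      using uf_finite_UNION[OF p, of "{..<m}" "\<lambda>i. {i}"] np by (auto simp: principal_def)
    moreover have "- (\<Union>i\<in>{..<m}. {i}) = {m..}" by auto
    ultimately show "{m..} \<in> p" using uf_Compl[OF p] by metis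
  qed
next
  assume "\<forall>m. {m..} \<in> p"
  moreover have "{n} \<inter> {Suc n..} = {}" for n by auto
  ultimately show "\<not> principal p"
    unfolding principal_def by (metis uf_Int[OF p] uf_empty[OF p])
qed

lemma nonprincipal_uf_unbounded:
  assumes p: "is_ultrafilter p" "\<not> principal p" and X: "X \<in> p"
  shows "\<exists>y\<in>X. a < y"
proof -
  have "X \<inter> {Suc a..} \<in> p" using X p nonprincipal_iff_tails uf_Int by blast
  then show ?thesis using uf_nonempty[OF p(1)] by fastforce
qed

definition proper_filter :: "nat set set \<Rightarrow> bool" where
  "proper_filter F \<longleftrightarrow> UNIV \<in> F \<and> {} \<notin> F \<and> (\<forall>A B. A \<in> F \<and> A \<subseteq> B \<longrightarrow> B \<in> F) \<and>
     (\<forall>A B. A \<in> F \<and> B \<in> F \<longrightarrow> A \<inter> B \<in> F)"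

lemma proper_filter_chain_Union:
  assumes "\<C> \<noteq> {}" and pf: "\<forall>F\<in>\<C>. proper_filter F"
    and chain: "\<forall>F\<in>\<C>. \<forall>G\<in>\<C>. F \<subseteq> G \<or> G \<subseteq> F"
  shows "proper_filter (\<Union>\<C>)"
  unfolding proper_filter_def
proof (intro conjI allI impI)
  show "UNIV \<in> \<Union>\<C>" "{} \<notin> \<Union>\<C>"
    using assms(1) pf unfolding proper_filter_def by blast+
next
  fix X Y assume "X \<in> \<Union>\<C> \<and> X \<subseteq> Y"
  then show "Y \<in> \<Union>\<C>" using pf unfolding proper_filter_def by blast
next
  fix X Y assume "X \<in> \<Union>\<C> \<and> Y \<in> \<Union>\<C>"
  then obtain F G where "F \<in> \<C>" "G \<in> \<C>" "X \<in> F" "Y \<in> G" by auto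
  with pf chain show "X \<inter> Y \<in> \<Union>\<C>"
    unfolding proper_filter_def by (metis UnionI subsetD)
qed

lemma maximal_proper_filter_is_ultrafilter:
  assumes M: "proper_filter M" and max: "\<And>F. proper_filter F \<Longrightarrow> M \<subseteq> F \<Longrightarrow> F = M"
  shows "is_ultrafilter M"
proof -
  have "A \<in> M \<or> - A \<in> M" for A
  proof (rule ccontr)
    assume nA: "\<not> (A \<in> M \<or> - A \<in> M)"
    define M' where "M' = {X. \<exists>m\<in>M. m \<inter> A \<subseteq> X}"
    have meets: "m \<inter> A \<noteq> {}" if "m \<in> M" for m
    proof
      assume "m \<inter> A = {}"
      then have "m \<subseteq> - A" by blast
      then show False using nA M that unfolding proper_filter_def by blast
    qed
    have "proper_filter M'"
      unfolding proper_filter_def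
    proof (intro conjI allI impI)
      show "UNIV \<in> M'" using M unfolding M'_def proper_filter_def by blast
      show "{} \<notin> M'" using meets unfolding M'_def by blast
    next
      fix X Y assume "X \<in> M' \<and> X \<subseteq> Y"
      then show "Y \<in> M'" unfolding M'_def by blast
    next
      fix X Y assume "X \<in> M' \<and> Y \<in> M'"
      then obtain m m' where mm': "m \<in> M" "m' \<in> M" "m \<inter> A \<subseteq> X" "m' \<inter> A \<subseteq> Y"
        unfolding M'_def by auto
      have "m \<inter> m' \<in> M" using M mm'(1,2) unfolding proper_filter_def by blast
      moreover have "(m \<inter> m') \<inter> A \<subseteq> X \<inter> Y" using mm'(3,4) by blast
      ultimately show "X \<inter> Y \<in> M'" unfolding M'_def by blast
    qed
    moreover have "M \<subseteq> M'" unfolding M'_def by auto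
    ultimately have "M' = M" by (rule max)
    moreover have "A \<in> M'" using M unfolding M'_def proper_filter_def by auto
    ultimately show False using nA by blast
  qed
  then show ?thesis using M unfolding proper_filter_def is_ultrafilter_def by blast
qed

lemma proper_filter_generated:
  assumes dir: "\<forall>A\<in>\<B>. \<forall>C\<in>\<B>. \<exists>D\<in>\<B>. D \<subseteq> A \<inter> C" and ne: "{} \<notin> \<B>"
  shows "proper_filter {X. X = UNIV \<or> (\<exists>b\<in>\<B>. b \<subseteq> X)}" (is "proper_filter ?F")
  unfolding proper_filter_def
proof (intro conjI allI impI)
  show "UNIV \<in> ?F" by simp
  show "{} \<notin> ?F" using ne by auto
next
  fix X Y assume "X \<in> ?F \<and> X \<subseteq> Y"
  then show "Y \<in> ?F" by auto
next
  fix X Y assume XY: "X \<in> ?F \<and> Y \<in> ?F"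
  show "X \<inter> Y \<in> ?F"
  proof (cases "X = UNIV \<or> Y = UNIV")
    case True
    then show ?thesis using XY by auto
  next
    case False
    then obtain a b where ab: "a \<in> \<B>" "b \<in> \<B>" "a \<subseteq> X" "b \<subseteq> Y" using XY by auto
    obtain d where d: "d \<in> \<B>" "d \<subseteq> a \<inter> b" using dir ab(1,2) by meson
    then have "d \<subseteq> X \<inter> Y" using ab(3,4) by blast
    then show ?thesis using d(1) by blast
  qed
qed

lemma filter_base_in_ultrafilter:
  assumes dir: "\<forall>A\<in>\<B>. \<forall>C\<in>\<B>. \<exists>D\<in>\<B>. D \<subseteq> A \<inter> C" and ne: "{} \<notin> \<B>"
  shows "\<exists>p. is_ultrafilter p \<and> \<B> \<subseteq> p"
proof -
  let ?\<A> = "{F. proper_filter F \<and> \<B> \<subseteq> F}"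
  have "\<exists>M\<in>?\<A>. \<forall>F\<in>?\<A>. M \<subseteq> F \<longrightarrow> F = M"
  proof (intro subset_Zorn_nonempty)
    have "{X. X = UNIV \<or> (\<exists>b\<in>\<B>. b \<subseteq> X)} \<in> ?\<A>"
      using proper_filter_generated[OF dir ne] by blast
    then show "?\<A> \<noteq> {}" by blast
  next
    fix \<C> assume "\<C> \<noteq> {}" "subset.chain ?\<A> \<C>"
    then have "\<C> \<subseteq> ?\<A>" and "\<forall>F\<in>\<C>. \<forall>G\<in>\<C>. F \<subseteq> G \<or> G \<subseteq> F"
      by (auto simp: subset_chain_def)
    with \<open>\<C> \<noteq> {}\<close> show "\<Union>\<C> \<in> ?\<A>"
      using proper_filter_chain_Union[of \<C>] by auto
  qed
  then obtain M where M: "proper_filter M" "\<B> \<subseteq> M" and max: "\<forall>F\<in>?\<A>. M \<subseteq> F \<longrightarrow> F = M"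
    by blast
  have "is_ultrafilter M"
  proof (rule maximal_proper_filter_is_ultrafilter[OF M(1)])
    fix F assume "proper_filter F" "M \<subseteq> F"
    then show "F = M" using max M(2) by blast
  qed
  then show ?thesis using M(2) by blast
qed

lemma decreasing_sets_in_ultrafilter:
  fixes S :: "nat \<Rightarrow> nat set"
  assumes anti: "\<And>m m'. m \<le> m' \<Longrightarrow> S m' \<subseteq> S m" and ne: "\<And>m. S m \<noteq> {}"
  shows "\<exists>p. is_ultrafilter p \<and> range S \<subseteq> p"
proof (rule filter_base_in_ultrafilter)
  show "\<forall>A\<in>range S. \<forall>B\<in>range S. \<exists>D\<in>range S. D \<subseteq> A \<inter> B"
  proof (intro ballI)
    fix A B assume "A \<in> range S" "B \<in> range S"
    then obtain m m' where "A = S m" "B = S m'" by blast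
    then have "S (max m m') \<subseteq> A \<inter> B" using anti by simp
    then show "\<exists>D\<in>range S. D \<subseteq> A \<inter> B" by blast
  qed
  show "{} \<notin> range S" using ne by (metis rangeE)
qed

section \<open>The Stone topology on \<open>\<beta>\<nat>\<close>\<close>

text \<open>\<open>p\<close> is in the closure of \<open>X\<close> iff every basic neighbourhood \<open>{q. A \<in> q}\<close>, \<open>A \<in> p\<close>, meets \<open>X\<close>.\<close>

definition uf_closed :: "nat set set set \<Rightarrow> bool" where
  "uf_closed X \<longleftrightarrow> X \<subseteq> betaN \<and> (\<forall>p\<in>betaN. (\<forall>A\<in>p. \<exists>q\<in>X. A \<in> q) \<longrightarrow> p \<in> X)"

lemma uf_closed_ultrafilter: "uf_closed X \<Longrightarrow> x \<in> X \<Longrightarrow> is_ultrafilter x"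
  by (auto simp: uf_closed_def betaN_def)

lemma uf_closed_Inter:
  assumes "\<F> \<noteq> {}" "\<forall>C\<in>\<F>. uf_closed C"
  shows "uf_closed (\<Inter>\<F>)"
  unfolding uf_closed_def
proof (intro conjI ballI impI)
  show "\<Inter>\<F> \<subseteq> betaN" using assms unfolding uf_closed_def by blast
next
  fix p assume p: "p \<in> betaN" and near: "\<forall>A\<in>p. \<exists>q\<in>\<Inter>\<F>. A \<in> q"
  show "p \<in> \<Inter>\<F>"
  proof
    fix C assume C: "C \<in> \<F>"
    have "\<forall>A\<in>p. \<exists>q\<in>C. A \<in> q"
    proof
      fix A assume "A \<in> p"
      with near obtain q where "q \<in> \<Inter>\<F>" "A \<in> q" by blast
      with C show "\<exists>q\<in>C. A \<in> q" by blast
    qed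
    with assms(2) C p show "p \<in> C" unfolding uf_closed_def by blast
  qed
qed

lemma uf_closed_Int: "uf_closed A \<Longrightarrow> uf_closed B \<Longrightarrow> uf_closed (A \<inter> B)"
  using uf_closed_Inter[of "{A, B}"] by simp

lemma uf_closed_containing: "uf_closed {p \<in> betaN. \<B> \<subseteq> p}"
  unfolding uf_closed_def
proof (intro conjI ballI impI)
  fix p assume p: "p \<in> betaN" and near: "\<forall>A\<in>p. \<exists>q\<in>{p \<in> betaN. \<B> \<subseteq> p}. A \<in> q"
  have "A \<in> p" if "A \<in> \<B>" for A
  proof (rule ccontr)
    assume "A \<notin> p"
    then have "- A \<in> p" using p uf_Compl by (auto simp: betaN_def)
    with near obtain q where "q \<in> betaN" "\<B> \<subseteq> q" "- A \<in> q" by blast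
    with that show False using uf_Compl by (auto simp: betaN_def)
  qed
  with p show "p \<in> {p \<in> betaN. \<B> \<subseteq> p}" by blast
qed auto

lemma uf_closed_betaN: "uf_closed betaN"
  using uf_closed_containing[of "{}"] by simp

lemma uf_closed_memI:
  assumes C: "uf_closed C" and p: "is_ultrafilter p" and common: "\<And>A. \<forall>q\<in>C. A \<in> q \<Longrightarrow> A \<in> p"
  shows "p \<in> C"
proof -
  have "\<exists>q\<in>C. A \<in> q" if "A \<in> p" for A
  proof (rule ccontr)
    assume "\<not> (\<exists>q\<in>C. A \<in> q)"
    then have "\<forall>q\<in>C. - A \<in> q" using uf_closed_ultrafilter[OF C] uf_Compl by blast
    then have "- A \<in> p" by (rule common)
    with that show False using uf_Compl[OF p] by blast
  qed
  then show ?thesis using C p unfolding uf_closed_def betaN_def by blast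
qed

lemma uf_closed_directed_Inter_nonempty:
  assumes ne: "\<F> \<noteq> {}" and cl: "\<forall>C\<in>\<F>. uf_closed C \<and> C \<noteq> {}"
    and dir: "\<forall>C1\<in>\<F>. \<forall>C2\<in>\<F>. \<exists>C3\<in>\<F>. C3 \<subseteq> C1 \<inter> C2"
  shows "\<Inter>\<F> \<noteq> {}"
proof -
  have uf: "is_ultrafilter q" if "C \<in> \<F>" "q \<in> C" for C q
    using cl that uf_closed_ultrafilter by blast
  define \<B> where "\<B> = {A. \<exists>C\<in>\<F>. \<forall>q\<in>C. A \<in> q}"
  have "\<forall>A\<in>\<B>. \<forall>B\<in>\<B>. \<exists>D\<in>\<B>. D \<subseteq> A \<inter> B"
  proof (intro ballI)
    fix A B assume "A \<in> \<B>" "B \<in> \<B>"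
    then obtain C1 C2 where C12: "C1 \<in> \<F>" "C2 \<in> \<F>" "\<forall>q\<in>C1. A \<in> q" "\<forall>q\<in>C2. B \<in> q"
      unfolding \<B>_def by blast
    obtain C3 where C3: "C3 \<in> \<F>" "C3 \<subseteq> C1 \<inter> C2" using dir C12(1,2) by meson
    have "A \<inter> B \<in> q" if "q \<in> C3" for q
    proof -
      have "q \<in> C1" "q \<in> C2" using that C3(2) by auto
      then show ?thesis using C12(3,4) uf_Int[OF uf[OF C3(1) that]] by simp
    qed
    then have "A \<inter> B \<in> \<B>" unfolding \<B>_def using C3(1) by auto
    then show "\<exists>D\<in>\<B>. D \<subseteq> A \<inter> B" by blast
  qed
  moreover have "{} \<notin> \<B>"
  proof
    assume "{} \<in> \<B>"
    then obtain C where C: "C \<in> \<F>" "\<forall>q\<in>C. {} \<in> q" unfolding \<B>_def by blast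
    moreover obtain q where "q \<in> C" using C(1) cl by blast
    ultimately show False using uf uf_empty by blast
  qed
  ultimately obtain p where p: "is_ultrafilter p" "\<B> \<subseteq> p"
    using filter_base_in_ultrafilter by blast
  have "p \<in> C" if "C \<in> \<F>" for C
    using uf_closed_memI[OF _ p(1)] cl p(2) that unfolding \<B>_def by blast
  then show ?thesis by blast
qed

lemma subset_Zorn_minimal:
  assumes "\<A> \<noteq> {}"
    and ch: "\<And>\<C>. \<C> \<noteq> {} \<Longrightarrow> \<C> \<subseteq> \<A> \<Longrightarrow> (\<forall>X\<in>\<C>. \<forall>Y\<in>\<C>. X \<subseteq> Y \<or> Y \<subseteq> X) \<Longrightarrow> \<Inter>\<C> \<in> \<A>"
  shows "\<exists>M\<in>\<A>. \<forall>X\<in>\<A>. X \<subseteq> M \<longrightarrow> X = M"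
proof -
  have "\<exists>M\<in>uminus ` \<A>. \<forall>X\<in>uminus ` \<A>. M \<subseteq> X \<longrightarrow> X = M"
  proof (rule subset_Zorn_nonempty)
    show "uminus ` \<A> \<noteq> {}" using assms(1) by blast
  next
    fix \<C> assume C: "\<C> \<noteq> {}" "subset.chain (uminus ` \<A>) \<C>"
    then have "uminus ` \<C> \<noteq> {}" "uminus ` \<C> \<subseteq> \<A>"
      "\<forall>X\<in>uminus ` \<C>. \<forall>Y\<in>uminus ` \<C>. X \<subseteq> Y \<or> Y \<subseteq> X"
      unfolding subset_chain_def by auto
    then have "\<Inter>(uminus ` \<C>) \<in> \<A>" by (rule ch)
    moreover have "\<Union>\<C> = - \<Inter>(uminus ` \<C>)" by auto
    ultimately show "\<Union>\<C> \<in> uminus ` \<A>" by (metis image_eqI)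
  qed
  then obtain M where "M \<in> \<A>" "\<forall>X\<in>\<A>. - M \<subseteq> - X \<longrightarrow> - X = - M" by auto
  then show ?thesis by (metis Compl_subset_Compl_iff compl_eq_compl_iff)
qed

lemma minimal_uf_closed_subset:
  assumes S: "uf_closed S" "S \<noteq> {}" "P S"
    and P_Inter: "\<And>\<C>. \<C> \<noteq> {} \<Longrightarrow> \<forall>C\<in>\<C>. P C \<Longrightarrow> P (\<Inter>\<C>)"
  obtains T where "T \<subseteq> S" "T \<noteq> {}" "uf_closed T" "P T"
    "\<And>X. X \<subseteq> T \<Longrightarrow> X \<noteq> {} \<Longrightarrow> uf_closed X \<Longrightarrow> P X \<Longrightarrow> X = T"
proof -
  define \<A> where "\<A> = {T. T \<subseteq> S \<and> T \<noteq> {} \<and> uf_closed T \<and> P T}"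
  have "\<exists>M\<in>\<A>. \<forall>X\<in>\<A>. X \<subseteq> M \<longrightarrow> X = M"
  proof (rule subset_Zorn_minimal)
    show "\<A> \<noteq> {}" using S unfolding \<A>_def by blast
  next
    fix \<C> assume C: "\<C> \<noteq> {}" "\<C> \<subseteq> \<A>" and chain: "\<forall>X\<in>\<C>. \<forall>Y\<in>\<C>. X \<subseteq> Y \<or> Y \<subseteq> X"
    have cl: "\<forall>C\<in>\<C>. uf_closed C \<and> C \<noteq> {}" using C(2) unfolding \<A>_def by blast
    have "\<exists>C3\<in>\<C>. C3 \<subseteq> C1 \<inter> C2" if "C1 \<in> \<C>" "C2 \<in> \<C>" for C1 C2
      using chain that by (metis Int_absorb1 Int_absorb2)
    then have "\<Inter>\<C> \<noteq> {}" using uf_closed_directed_Inter_nonempty[OF C(1) cl] by simp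
    moreover have "uf_closed (\<Inter>\<C>)" using uf_closed_Inter[OF C(1)] cl by blast
    moreover have "P (\<Inter>\<C>)" using P_Inter[OF C(1)] C(2) unfolding \<A>_def by blast
    moreover have "\<Inter>\<C> \<subseteq> S" using C unfolding \<A>_def by blast
    ultimately show "\<Inter>\<C> \<in> \<A>" unfolding \<A>_def by blast
  qed
  then obtain T where T: "T \<in> \<A>" and min: "\<forall>X\<in>\<A>. X \<subseteq> T \<longrightarrow> X = T" by blast
  show ?thesis
  proof (rule that)
    show "T \<subseteq> S" "T \<noteq> {}" "uf_closed T" "P T" using T unfolding \<A>_def by auto
  next
    fix X assume "X \<subseteq> T" "X \<noteq> {}" "uf_closed X" "P X"
    moreover from this have "X \<in> \<A>" using T unfolding \<A>_def by auto
    ultimately show "X = T" using min by blast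
  qed
qed

section \<open>The semigroup \<open>(\<beta>\<nat>, \<oplus>\<^sub>\<beta>)\<close>\<close>

lemma shift_set_Int: "shift_set (A \<inter> B) n = shift_set A n \<inter> shift_set B n"
  by (auto simp: shift_set_def)

lemma shift_set_Compl: "shift_set (- A) n = - shift_set A n"
  by (auto simp: shift_set_def)

lemma shift_set_mono: "A \<subseteq> B \<Longrightarrow> shift_set A n \<subseteq> shift_set B n"
  by (auto simp: shift_set_def)

lemma shift_set_shift_set: "shift_set (shift_set A n) m = shift_set A (m + n)"
  by (auto simp: shift_set_def add.assoc)

lemma uf_add_iff: "A \<in> p \<oplus>\<^sub>\<beta> q \<longleftrightarrow> {n. shift_set A n \<in> p} \<in> q"
  by (simp add: uf_add_def)

lemma is_ultrafilter_uf_add: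
  assumes p: "is_ultrafilter p" and q: "is_ultrafilter q"
  shows "is_ultrafilter (p \<oplus>\<^sub>\<beta> q)"
proof -
  have Int: "{n. shift_set (A \<inter> B) n \<in> p} = {n. shift_set A n \<in> p} \<inter> {n. shift_set B n \<in> p}" for A B
    by (simp add: shift_set_Int uf_Int[OF p] Collect_conj_eq)
  have Compl: "{n. shift_set (- A) n \<in> p} = - {n. shift_set A n \<in> p}" for A
    by (simp add: shift_set_Compl uf_Compl[OF p] Collect_neg_eq)
  have mono: "{n. shift_set A n \<in> p} \<subseteq> {n. shift_set B n \<in> p}" if "A \<subseteq> B" for A B
    using uf_mono[OF p _ shift_set_mono[OF that]] by (simp add: Collect_mono)
  show ?thesis
    unfolding is_ultrafilter_def uf_add_iff
  proof (intro conjI allI impI)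
    show "{n. shift_set UNIV n \<in> p} \<in> q" using uf_UNIV[OF p] uf_UNIV[OF q] by (simp add: shift_set_def)
    show "{n. shift_set {} n \<in> p} \<notin> q" using uf_empty[OF p] uf_empty[OF q] by (simp add: shift_set_def)
  next
    fix A B assume "{n. shift_set A n \<in> p} \<in> q \<and> A \<subseteq> B"
    then show "{n. shift_set B n \<in> p} \<in> q" using mono uf_mono[OF q] by meson
  next
    fix A B assume "{n. shift_set A n \<in> p} \<in> q \<and> {n. shift_set B n \<in> p} \<in> q"
    then show "{n. shift_set (A \<inter> B) n \<in> p} \<in> q" unfolding Int using uf_Int[OF q] by simp
  next
    fix A
    show "{n. shift_set A n \<in> p} \<in> q \<or> {n. shift_set (- A) n \<in> p} \<in> q"
      unfolding Compl using uf_Compl[OF q] by simp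
  qed
qed

lemma uf_add_assoc: "(p \<oplus>\<^sub>\<beta> q) \<oplus>\<^sub>\<beta> r = p \<oplus>\<^sub>\<beta> (q \<oplus>\<^sub>\<beta> r)"
proof -
  have "{n. {m. shift_set (shift_set A n) m \<in> p} \<in> q} = {n. shift_set {m. shift_set A m \<in> p} n \<in> q}" for A
    by (simp add: shift_set_shift_set shift_set_def add.assoc)
  then show ?thesis unfolding uf_add_def by simp
qed

lemma nonprincipal_uf_add:
  assumes p: "is_ultrafilter p" "\<not> principal p" and t: "is_ultrafilter t"
  shows "\<not> principal (p \<oplus>\<^sub>\<beta> t)"
proof -
  have "{n. shift_set {m..} n \<in> p} = UNIV" for m
  proof -
    have "{m..} \<subseteq> shift_set {m..} n" for n by (auto simp: shift_set_def)
    moreover have "{m..} \<in> p" using p nonprincipal_iff_tails by blast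
    ultimately show ?thesis using uf_mono[OF p(1)] by blast
  qed
  then show ?thesis
    unfolding nonprincipal_iff_tails[OF is_ultrafilter_uf_add[OF p(1) t]] uf_add_iff
    using uf_UNIV[OF t] by simp
qed

text \<open>Left translation \<open>t \<mapsto> e \<oplus>\<^sub>\<beta> t\<close> is continuous, so it maps compact (closed) sets to closed sets.\<close>

lemma uf_closed_left_translate:
  assumes e: "is_ultrafilter e" and T: "uf_closed T"
  shows "uf_closed ((\<lambda>t. e \<oplus>\<^sub>\<beta> t) ` T)"
  unfolding uf_closed_def
proof (intro conjI ballI impI subsetI)
  fix x assume "x \<in> (\<lambda>t. e \<oplus>\<^sub>\<beta> t) ` T"
  then show "x \<in> betaN"
    using is_ultrafilter_uf_add[OF e] uf_closed_ultrafilter[OF T] by (auto simp: betaN_def)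
next
  fix q assume q: "q \<in> betaN" and near: "\<forall>A\<in>q. \<exists>x\<in>(\<lambda>t. e \<oplus>\<^sub>\<beta> t) ` T. A \<in> x"
  have uq: "is_ultrafilter q" using q by (simp add: betaN_def)
  define H where "H A = T \<inter> {t \<in> betaN. {{n. shift_set A n \<in> e}} \<subseteq> t}" for A
  have H_iff: "t \<in> H A \<longleftrightarrow> t \<in> T \<and> A \<in> e \<oplus>\<^sub>\<beta> t" for t A
    using T unfolding H_def uf_closed_def uf_add_iff by auto
  have "\<Inter>(H ` q) \<noteq> {}"
  proof (rule uf_closed_directed_Inter_nonempty)
    show "H ` q \<noteq> {}" using uf_UNIV[OF uq] by blast
    show "\<forall>C\<in>H ` q. uf_closed C \<and> C \<noteq> {}"
      using uf_closed_Int[OF T uf_closed_containing] near H_iff unfolding H_def by blast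
    have "H (A1 \<inter> A2) = H A1 \<inter> H A2" for A1 A2
      using uf_Int[OF is_ultrafilter_uf_add[OF e uf_closed_ultrafilter[OF T]]] H_iff by blast
    then show "\<forall>C1\<in>H ` q. \<forall>C2\<in>H ` q. \<exists>C3\<in>H ` q. C3 \<subseteq> C1 \<inter> C2"
      using uf_Int[OF uq] by (metis (no_types, lifting) imageE image_eqI order_refl)
  qed
  then obtain t where t: "\<And>A. A \<in> q \<Longrightarrow> t \<in> H A" by blast
  then have "t \<in> T" using uf_UNIV[OF uq] H_iff by blast
  have "q = e \<oplus>\<^sub>\<beta> t"
    using uf_eq[OF uq is_ultrafilter_uf_add[OF e uf_closed_ultrafilter[OF T \<open>t \<in> T\<close>]]] t H_iff
    by blast
  then show "q \<in> (\<lambda>t. e \<oplus>\<^sub>\<beta> t) ` T" using \<open>t \<in> T\<close> by blast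
qed

lemma uf_closed_left_fixed:
  assumes e: "is_ultrafilter e"
  shows "uf_closed {t \<in> betaN. e \<oplus>\<^sub>\<beta> t = e}"
proof -
  have "e \<oplus>\<^sub>\<beta> t = e \<longleftrightarrow> {{n. shift_set A n \<in> e} | A. A \<in> e} \<subseteq> t" if "t \<in> betaN" for t
  proof -
    have "e \<oplus>\<^sub>\<beta> t = e \<longleftrightarrow> e \<subseteq> e \<oplus>\<^sub>\<beta> t"
      using uf_eq[OF e is_ultrafilter_uf_add[OF e]] that unfolding betaN_def
      by (metis mem_Collect_eq order_refl)
    also have "\<dots> \<longleftrightarrow> {{n. shift_set A n \<in> e} | A. A \<in> e} \<subseteq> t"
      unfolding subset_iff uf_add_iff by blast
    finally show ?thesis .
  qed
  then have "{t \<in> betaN. e \<oplus>\<^sub>\<beta> t = e} = {t \<in> betaN. {{n. shift_set A n \<in> e} | A. A \<in> e} \<subseteq> t}"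
    by auto
  then show ?thesis using uf_closed_containing by simp
qed

text \<open>Ellis--Numakura: a minimal closed subsemigroup \<open>T\<close> satisfies \<open>e \<oplus>\<^sub>\<beta> T = T\<close> for \<open>e \<in> T\<close>,
  and then \<open>{t \<in> T. e \<oplus>\<^sub>\<beta> t = e}\<close> is a nonempty closed subsemigroup, so it is all of \<open>T\<close>.\<close>

lemma idempotent_in_closed_subsemigroup:
  assumes S: "uf_closed S" "S \<noteq> {}" "\<forall>x\<in>S. \<forall>y\<in>S. x \<oplus>\<^sub>\<beta> y \<in> S"
  shows "\<exists>e\<in>S. e \<oplus>\<^sub>\<beta> e = e"
proof -
  have Inter: "\<And>\<C>. \<C> \<noteq> {} \<Longrightarrow> \<forall>C\<in>\<C>. \<forall>x\<in>C. \<forall>y\<in>C. x \<oplus>\<^sub>\<beta> y \<in> C \<Longrightarrow>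
      \<forall>x\<in>\<Inter>\<C>. \<forall>y\<in>\<Inter>\<C>. x \<oplus>\<^sub>\<beta> y \<in> \<Inter>\<C>"
    by blast
  obtain T where T: "T \<subseteq> S" "T \<noteq> {}" "uf_closed T" and semi: "\<forall>x\<in>T. \<forall>y\<in>T. x \<oplus>\<^sub>\<beta> y \<in> T"
    and min: "\<And>X. X \<subseteq> T \<Longrightarrow> X \<noteq> {} \<Longrightarrow> uf_closed X \<Longrightarrow> \<forall>x\<in>X. \<forall>y\<in>X. x \<oplus>\<^sub>\<beta> y \<in> X \<Longrightarrow> X = T"
    using minimal_uf_closed_subset[where P = "\<lambda>T. \<forall>x\<in>T. \<forall>y\<in>T. x \<oplus>\<^sub>\<beta> y \<in> T", OF S Inter]
    by metis
  obtain e where e: "e \<in> T" using T(2) by blast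
  have eu: "is_ultrafilter e" using uf_closed_ultrafilter[OF T(3) e] .
  have "(\<lambda>t. e \<oplus>\<^sub>\<beta> t) ` T = T"
  proof (rule min)
    show "(\<lambda>t. e \<oplus>\<^sub>\<beta> t) ` T \<subseteq> T" using semi e by blast
    show "(\<lambda>t. e \<oplus>\<^sub>\<beta> t) ` T \<noteq> {}" using T(2) by blast
    show "uf_closed ((\<lambda>t. e \<oplus>\<^sub>\<beta> t) ` T)" using uf_closed_left_translate[OF eu T(3)] .
    have "e \<oplus>\<^sub>\<beta> t \<oplus>\<^sub>\<beta> (e \<oplus>\<^sub>\<beta> t') = e \<oplus>\<^sub>\<beta> (t \<oplus>\<^sub>\<beta> (e \<oplus>\<^sub>\<beta> t'))" for t t'
      by (simp add: uf_add_assoc)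
    then show "\<forall>x\<in>(\<lambda>t. e \<oplus>\<^sub>\<beta> t) ` T. \<forall>y\<in>(\<lambda>t. e \<oplus>\<^sub>\<beta> t) ` T. x \<oplus>\<^sub>\<beta> y \<in> (\<lambda>t. e \<oplus>\<^sub>\<beta> t) ` T"
      using semi e by auto
  qed
  then obtain t where "t \<in> T" "e \<oplus>\<^sub>\<beta> t = e" using e by (metis imageE)
  define Z where "Z = T \<inter> {t \<in> betaN. e \<oplus>\<^sub>\<beta> t = e}"
  have "Z = T"
  proof (rule min)
    show "Z \<subseteq> T" unfolding Z_def by blast
    show "Z \<noteq> {}"
      using \<open>t \<in> T\<close> \<open>e \<oplus>\<^sub>\<beta> t = e\<close> uf_closed_ultrafilter[OF T(3)] unfolding Z_def betaN_def by blast
    show "uf_closed Z" unfolding Z_def using uf_closed_Int[OF T(3) uf_closed_left_fixed[OF eu]] .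
    show "\<forall>x\<in>Z. \<forall>y\<in>Z. x \<oplus>\<^sub>\<beta> y \<in> Z"
    proof (intro ballI)
      fix x y assume "x \<in> Z" "y \<in> Z"
      then have "x \<in> T" "y \<in> T" "e \<oplus>\<^sub>\<beta> x = e" "e \<oplus>\<^sub>\<beta> y = e" unfolding Z_def by auto
      then have "x \<oplus>\<^sub>\<beta> y \<in> T" "e \<oplus>\<^sub>\<beta> (x \<oplus>\<^sub>\<beta> y) = e"
        using semi by (auto simp flip: uf_add_assoc)
      then show "x \<oplus>\<^sub>\<beta> y \<in> Z" unfolding Z_def using T(3) uf_closed_def by blast
    qed
  qed
  then have "e \<oplus>\<^sub>\<beta> e = e" using e unfolding Z_def by blast
  then show ?thesis using e T(1) by blast
qed

section \<open>Ultrafilter limits of shifts of a word\<close>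

text \<open>The point \<open>p-lim\<^sub>n T\<^sup>n v\<close> of the orbit closure of \<open>v\<close> under the shift \<open>T\<close>, computed letter by
  letter. Over a finite alphabet exactly one letter \<open>a\<close> has \<open>{n. v (n + i) = a} \<in> p\<close>.\<close>

definition shift_limit :: "nat set set \<Rightarrow> (nat \<Rightarrow> 'a) \<Rightarrow> nat \<Rightarrow> 'a" where
  "shift_limit p v i = (SOME a. {n. v (n + i) = a} \<in> p)"

lemma shift_limit_mem:
  assumes p: "is_ultrafilter p" and fin: "finite (range v)"
  shows "{n. v (n + i) = shift_limit p v i} \<in> p"
proof -
  have "(\<Union>a\<in>range v. {n. v (n + i) = a}) = UNIV" by auto
  then have "(\<Union>a\<in>range v. {n. v (n + i) = a}) \<in> p"
    using uf_UNIV[OF p] by (simp only:)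
  then have "\<exists>a\<in>range v. {n. v (n + i) = a} \<in> p"
    by (rule uf_finite_UNION[OF p fin])
  then show ?thesis unfolding shift_limit_def by (metis someI_ex)
qed

lemma shift_limit_eqI:
  assumes p: "is_ultrafilter p" and fin: "finite (range v)" and a: "{n. v (n + i) = a} \<in> p"
  shows "shift_limit p v i = a"
proof (rule ccontr)
  assume "shift_limit p v i \<noteq> a"
  then have "{n. v (n + i) = a} \<inter> {n. v (n + i) = shift_limit p v i} = {}" by auto
  then show False using a shift_limit_mem[OF p fin] uf_Int[OF p] uf_empty[OF p] by metis
qed

lemma shift_limit_iff:
  assumes "is_ultrafilter p" "finite (range v)"
  shows "{n. v (n + i) = a} \<in> p \<longleftrightarrow> shift_limit p v i = a"
  using shift_limit_eqI[OF assms] shift_limit_mem[OF assms] by blast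

lemma finite_range_shift_limit:
  assumes p: "is_ultrafilter p" and fin: "finite (range v)"
  shows "finite (range (shift_limit p v))"
proof (rule finite_subset[OF _ fin], rule subsetI)
  fix b assume "b \<in> range (shift_limit p v)"
  then obtain i where "{n. v (n + i) = b} \<in> p" using shift_limit_mem[OF p fin] by blast
  then show "b \<in> range v" using uf_nonempty[OF p] by fastforce
qed

lemma shift_limit_uf_add:
  assumes p: "is_ultrafilter p" and q: "is_ultrafilter q" and fin: "finite (range v)"
  shows "shift_limit (p \<oplus>\<^sub>\<beta> q) v = shift_limit q (shift_limit p v)"
proof
  fix i
  let ?b = "shift_limit q (shift_limit p v) i"
  have "shift_set {n. v (n + i) = ?b} m = {n. v (n + (m + i)) = ?b}" for m
    by (simp add: shift_set_def add.assoc)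
  then have "{m. shift_set {n. v (n + i) = ?b} m \<in> p} = {m. shift_limit p v (m + i) = ?b}"
    using shift_limit_iff[OF p fin] by simp
  moreover have "{m. shift_limit p v (m + i) = ?b} \<in> q"
    using shift_limit_mem[OF q finite_range_shift_limit[OF p fin]] .
  ultimately have "{n. v (n + i) = ?b} \<in> p \<oplus>\<^sub>\<beta> q" unfolding uf_add_iff by simp
  then show "shift_limit (p \<oplus>\<^sub>\<beta> q) v i = ?b"
    using shift_limit_eqI[OF is_ultrafilter_uf_add[OF p q] fin] by simp
qed

lemma occurrences_eq_INT: "occurrences v u = (\<Inter>i\<in>{..<length u}. {n. v (n + i) = u ! i})"
  unfolding occurrences_def by auto

lemma occurrences_in_uf_iff:
  assumes p: "is_ultrafilter p" and fin: "finite (range v)"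
  shows "occurrences v u \<in> p \<longleftrightarrow> (\<forall>i<length u. shift_limit p v i = u ! i)"
proof
  assume occ: "occurrences v u \<in> p"
  have "{n. v (n + i) = u ! i} \<in> p" if "i < length u" for i
  proof (rule uf_mono[OF p occ])
    show "occurrences v u \<subseteq> {n. v (n + i) = u ! i}" using that by (auto simp: occurrences_def)
  qed
  then show "\<forall>i<length u. shift_limit p v i = u ! i" using shift_limit_eqI[OF p fin] by blast
next
  assume u: "\<forall>i<length u. shift_limit p v i = u ! i"
  have "\<forall>i\<in>{..<length u}. {n. v (n + i) = u ! i} \<in> p"
  proof
    fix i assume "i \<in> {..<length u}"
    then have "u ! i = shift_limit p v i" using u by simp
    then show "{n. v (n + i) = u ! i} \<in> p" using shift_limit_mem[OF p fin, of i] by simp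
  qed
  then show "occurrences v u \<in> p"
    unfolding occurrences_eq_INT by (rule uf_finite_INTER[OF p finite_lessThan])
qed

lemma uf_closed_shift_limit_eq:
  assumes fin: "finite (range v)"
  shows "uf_closed {r \<in> betaN. shift_limit r v = y}"
proof -
  have eq: "shift_limit r v = y \<longleftrightarrow> range (\<lambda>i. {n. v (n + i) = y i}) \<subseteq> r" if "r \<in> betaN" for r
  proof -
    have "shift_limit r v = y \<longleftrightarrow> (\<forall>i. {n. v (n + i) = y i} \<in> r)"
      using shift_limit_iff[OF _ fin, of r] that unfolding betaN_def fun_eq_iff by simp
    also have "\<dots> \<longleftrightarrow> range (\<lambda>i. {n. v (n + i) = y i}) \<subseteq> r" by blast
    finally show ?thesis .
  qed
  have "{r \<in> betaN. shift_limit r v = y} = {r \<in> betaN. range (\<lambda>i. {n. v (n + i) = y i}) \<subseteq> r}"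
    by (rule Collect_cong) (use eq in blast)
  then show ?thesis using uf_closed_containing by simp
qed

section \<open>Minimality of the orbit closure of a uniformly recurrent word\<close>

lemma prefix_of_shift_limit_occurrences:
  assumes p: "is_ultrafilter p" and fin: "finite (range v)"
  shows "occurrences v (map (shift_limit p v) [0..<L]) \<in> p"
  using occurrences_in_uf_iff[OF p fin] by simp

lemma uniformly_recurrent_factor_of_shift_limit:
  assumes fin: "finite (range w)" and ur: "uniformly_recurrent w"
    and r: "is_ultrafilter r" and x: "is_factor w x"
  shows "occurrences (shift_limit r w) x \<noteq> {}"
proof -
  let ?z = "shift_limit r w"
  obtain g where g: "\<forall>n. \<exists>m\<in>occurrences w x. n \<le> m \<and> m < n + g"
    using ur x unfolding uniformly_recurrent_def bounded_gaps_def by blast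
  obtain k where k: "k \<in> occurrences w (map ?z [0..<g + length x])"
    using uf_nonempty[OF r prefix_of_shift_limit_occurrences[OF r fin]] by blast
  obtain m where m: "m \<in> occurrences w x" "k \<le> m" "m < k + g" using g by blast
  have "m - k \<in> occurrences ?z x"
    unfolding occurrences_def
  proof (intro CollectI allI impI)
    fix i assume "i < length x"
    then have "?z (m - k + i) = w (k + (m - k + i))"
      using k m(3) by (auto simp: occurrences_def)
    also have "\<dots> = x ! i" using m(1,2) \<open>i < length x\<close> by (simp add: occurrences_def)
    finally show "?z (m - k + i) = x ! i" .
  qed
  then show ?thesis by blast
qed

lemma uniformly_recurrent_shift_limit_return:
  assumes fin: "finite (range w)" and ur: "uniformly_recurrent w"
    and p: "is_ultrafilter p" and r: "is_ultrafilter r"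
  shows "\<exists>s. is_ultrafilter s \<and> shift_limit s (shift_limit r w) = shift_limit p w"
proof -
  let ?y = "shift_limit p w" and ?z = "shift_limit r w"
  define S where "S L = occurrences ?z (map ?y [0..<Suc L])" for L
  have "S L \<noteq> {}" for L
  proof -
    have "is_factor w (map ?y [0..<Suc L])"
      using uf_nonempty[OF p prefix_of_shift_limit_occurrences[OF p fin, of "Suc L"]]
      unfolding is_factor_def by (simp del: upt_Suc)
    then show ?thesis unfolding S_def by (rule uniformly_recurrent_factor_of_shift_limit[OF fin ur r])
  qed
  moreover have "S L' \<subseteq> S L" if "L \<le> L'" for L L'
    using that unfolding S_def occurrences_def by (auto simp del: upt_Suc)
  ultimately obtain s where s: "is_ultrafilter s" "range S \<subseteq> s"
    using decreasing_sets_in_ultrafilter by blast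
  have "shift_limit s ?z i = ?y i" for i
  proof (rule shift_limit_eqI[OF s(1) finite_range_shift_limit[OF r fin]])
    have "S i \<subseteq> {n. ?z (n + i) = ?y i}" unfolding S_def occurrences_def by (auto simp del: upt_Suc)
    then show "{n. ?z (n + i) = ?y i} \<in> s" using s uf_mono by blast
  qed
  then show ?thesis using s(1) by blast
qed

section \<open>Minimal right ideals and central sets\<close>

definition right_ideal :: "nat set set set \<Rightarrow> bool" where
  "right_ideal R \<longleftrightarrow> (\<forall>x\<in>R. \<forall>t\<in>betaN. x \<oplus>\<^sub>\<beta> t \<in> R)"

lemma right_ideal_left_translate_betaN:
  assumes "is_ultrafilter x"
  shows "right_ideal ((\<lambda>t. x \<oplus>\<^sub>\<beta> t) ` betaN)"
  unfolding right_ideal_def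
proof (intro ballI)
  fix z t assume "z \<in> (\<lambda>t. x \<oplus>\<^sub>\<beta> t) ` betaN" "t \<in> betaN"
  then obtain t0 where "t0 \<in> betaN" "z = x \<oplus>\<^sub>\<beta> t0" by blast
  moreover from this have "t0 \<oplus>\<^sub>\<beta> t \<in> betaN"
    using \<open>t \<in> betaN\<close> is_ultrafilter_uf_add by (auto simp: betaN_def)
  ultimately show "z \<oplus>\<^sub>\<beta> t \<in> (\<lambda>t. x \<oplus>\<^sub>\<beta> t) ` betaN" by (auto simp: uf_add_assoc)
qed

text \<open>A minimal closed right ideal \<open>R\<close> equals \<open>x \<oplus>\<^sub>\<beta> \<beta>\<nat>\<close> for each of its elements \<open>x\<close>; choosing
  \<open>x \<in> R \<inter> I\<close> for a two-sided ideal \<open>I\<close> shows \<open>R \<subseteq> I\<close>.\<close>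

lemma closed_right_ideal_in_K_below:
  assumes x: "is_ultrafilter x"
  obtains R where "R \<subseteq> (\<lambda>t. x \<oplus>\<^sub>\<beta> t) ` betaN" "R \<noteq> {}" "uf_closed R" "right_ideal R" "R \<subseteq> K_betaN"
proof -
  have Inter: "\<And>\<C>. \<C> \<noteq> {} \<Longrightarrow> \<forall>C\<in>\<C>. right_ideal C \<Longrightarrow> right_ideal (\<Inter>\<C>)"
    unfolding right_ideal_def by blast
  have "(\<lambda>t. x \<oplus>\<^sub>\<beta> t) ` betaN \<noteq> {}" using x by (auto simp: betaN_def)
  then obtain R where R: "R \<subseteq> (\<lambda>t. x \<oplus>\<^sub>\<beta> t) ` betaN" "R \<noteq> {}" "uf_closed R" "right_ideal R"
    and min: "\<And>X. X \<subseteq> R \<Longrightarrow> X \<noteq> {} \<Longrightarrow> uf_closed X \<Longrightarrow> right_ideal X \<Longrightarrow> X = R"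
    using minimal_uf_closed_subset[where P = right_ideal, OF
        uf_closed_left_translate[OF x uf_closed_betaN] _ right_ideal_left_translate_betaN[OF x] Inter]
    by metis
  have generated: "(\<lambda>t. z \<oplus>\<^sub>\<beta> t) ` betaN = R" if z: "z \<in> R" for z
  proof (rule min)
    have "is_ultrafilter z" using uf_closed_ultrafilter[OF R(3) z] .
    then show "uf_closed ((\<lambda>t. z \<oplus>\<^sub>\<beta> t) ` betaN)" "right_ideal ((\<lambda>t. z \<oplus>\<^sub>\<beta> t) ` betaN)"
      using uf_closed_left_translate uf_closed_betaN right_ideal_left_translate_betaN by blast+
    show "(\<lambda>t. z \<oplus>\<^sub>\<beta> t) ` betaN \<subseteq> R" using R(4) z unfolding right_ideal_def by blast
    show "(\<lambda>t. z \<oplus>\<^sub>\<beta> t) ` betaN \<noteq> {}" using x by (auto simp: betaN_def)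
  qed
  have "R \<subseteq> I" if I: "two_sided_ideal I" for I
  proof -
    obtain i z where "i \<in> I" "z \<in> R" using I R(2) unfolding two_sided_ideal_def by blast
    then have zi: "z \<oplus>\<^sub>\<beta> i \<in> R" "z \<oplus>\<^sub>\<beta> i \<in> I"
      using I R(3,4) uf_closed_def unfolding two_sided_ideal_def right_ideal_def by blast+
    have "(\<lambda>t. (z \<oplus>\<^sub>\<beta> i) \<oplus>\<^sub>\<beta> t) ` betaN \<subseteq> I"
      using I zi(2) unfolding two_sided_ideal_def by blast
    then show "R \<subseteq> I" using generated[OF zi(1)] by simp
  qed
  then have "R \<subseteq> K_betaN" unfolding K_betaN_def by blast
  with R show ?thesis using that by blast
qed

lemma right_ideal_meets_shift_limit_fixed:
  assumes fin: "finite (range w)" and ur: "uniformly_recurrent w"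
    and p: "is_ultrafilter p" and idem: "p \<oplus>\<^sub>\<beta> p = p"
    and R: "R \<subseteq> (\<lambda>t. p \<oplus>\<^sub>\<beta> t) ` betaN" "R \<noteq> {}" "right_ideal R"
  shows "\<exists>r\<in>R. shift_limit r w = shift_limit p w \<and> shift_limit r (shift_limit p w) = shift_limit p w"
proof -
  let ?y = "shift_limit p w"
  obtain r0 where "r0 \<in> R" using R(2) by blast
  then obtain t0 where r0: "r0 \<in> R" "is_ultrafilter t0" "r0 = p \<oplus>\<^sub>\<beta> t0"
    using R(1) unfolding betaN_def by blast
  have ur0: "is_ultrafilter r0" using is_ultrafilter_uf_add[OF p r0(2)] r0(3) by simp
  obtain s where s: "is_ultrafilter s" "shift_limit s (shift_limit r0 w) = ?y"
    using uniformly_recurrent_shift_limit_return[OF fin ur p ur0] by blast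
  have ts: "is_ultrafilter (t0 \<oplus>\<^sub>\<beta> s)" using is_ultrafilter_uf_add[OF r0(2) s(1)] .
  have r1: "r0 \<oplus>\<^sub>\<beta> s = p \<oplus>\<^sub>\<beta> (t0 \<oplus>\<^sub>\<beta> s)" by (simp add: r0(3) uf_add_assoc)
  have "r0 \<oplus>\<^sub>\<beta> s \<in> R" using R(3) r0(1) s(1) unfolding right_ideal_def betaN_def by blast
  moreover have w: "shift_limit (r0 \<oplus>\<^sub>\<beta> s) w = ?y"
    using shift_limit_uf_add[OF ur0 s(1) fin] s(2) by simp
  moreover have "shift_limit (r0 \<oplus>\<^sub>\<beta> s) ?y = ?y"
  proof -
    have "shift_limit p ?y = ?y" using shift_limit_uf_add[OF p p fin] idem by simp
    then have "shift_limit (r0 \<oplus>\<^sub>\<beta> s) ?y = shift_limit (t0 \<oplus>\<^sub>\<beta> s) ?y"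
      unfolding r1 using shift_limit_uf_add[OF p ts finite_range_shift_limit[OF p fin]] by simp
    also have "\<dots> = shift_limit (r0 \<oplus>\<^sub>\<beta> s) w" unfolding r1 using shift_limit_uf_add[OF p ts fin] by simp
    finally show ?thesis using w by simp
  qed
  ultimately show ?thesis by blast
qed

text \<open>The idempotent \<open>p\<close> is traded for an idempotent \<open>e\<close> of a minimal right ideal inside
  \<open>p \<oplus>\<^sub>\<beta> \<beta>\<nat>\<close> with the same limit point \<open>shift_limit e w = shift_limit p w\<close>; the latter decides
  which occurrence sets belong to \<open>e\<close>.\<close>

lemma uniformly_recurrent_occurrences_central:
  assumes fin: "finite (range w)" and ur: "uniformly_recurrent w"
    and p: "idempotent p" and occ: "occurrences w u \<in> p"
  shows "central (occurrences w u)"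
proof -
  have up: "is_ultrafilter p" and np: "\<not> principal p" and idem: "p \<oplus>\<^sub>\<beta> p = p"
    using p unfolding idempotent_def betaN_def by auto
  let ?y = "shift_limit p w"
  obtain R where R: "R \<subseteq> (\<lambda>t. p \<oplus>\<^sub>\<beta> t) ` betaN" "R \<noteq> {}" "uf_closed R" "right_ideal R" "R \<subseteq> K_betaN"
    using closed_right_ideal_in_K_below[OF up] by blast
  define S where "S = R \<inter> {r \<in> betaN. shift_limit r w = ?y} \<inter> {r \<in> betaN. shift_limit r ?y = ?y}"
  have "\<exists>e\<in>S. e \<oplus>\<^sub>\<beta> e = e"
  proof (rule idempotent_in_closed_subsemigroup)
    show "uf_closed S"
      unfolding S_def using R(3) uf_closed_shift_limit_eq fin finite_range_shift_limit[OF up fin]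
      by (intro uf_closed_Int)
    show "S \<noteq> {}"
      using right_ideal_meets_shift_limit_fixed[OF fin ur up idem R(1,2,4)] R(3)
      unfolding S_def uf_closed_def by blast
    show "\<forall>x\<in>S. \<forall>z\<in>S. x \<oplus>\<^sub>\<beta> z \<in> S"
    proof (intro ballI)
      fix x z assume "x \<in> S" "z \<in> S"
      then have x: "x \<in> R" "is_ultrafilter x" "shift_limit x w = ?y" "shift_limit x ?y = ?y" and
        z: "z \<in> betaN" "is_ultrafilter z" "shift_limit z w = ?y" "shift_limit z ?y = ?y"
        unfolding S_def betaN_def by auto
      have "x \<oplus>\<^sub>\<beta> z \<in> R" using R(4) x(1) z(1) unfolding right_ideal_def by blast
      moreover have "x \<oplus>\<^sub>\<beta> z \<in> betaN" using is_ultrafilter_uf_add[OF x(2) z(2)] by (simp add: betaN_def)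
      moreover have "shift_limit (x \<oplus>\<^sub>\<beta> z) w = ?y"
        using shift_limit_uf_add[OF x(2) z(2) fin] x(3) z(4) by simp
      moreover have "shift_limit (x \<oplus>\<^sub>\<beta> z) ?y = ?y"
        using shift_limit_uf_add[OF x(2) z(2) finite_range_shift_limit[OF up fin]] x(4) z(4) by simp
      ultimately show "x \<oplus>\<^sub>\<beta> z \<in> S" unfolding S_def by blast
    qed
  qed
  then obtain e where e: "e \<in> S" "e \<oplus>\<^sub>\<beta> e = e" by blast
  then obtain t where t: "is_ultrafilter t" "e = p \<oplus>\<^sub>\<beta> t" using R(1) unfolding S_def betaN_def by blast
  have ue: "e \<in> betaN" "is_ultrafilter e" and ew: "shift_limit e w = ?y"
    using e(1) unfolding S_def betaN_def by auto
  have "idempotent e"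
    unfolding idempotent_def using ue(1) e(2) nonprincipal_uf_add[OF up np t(1)] t(2) by simp
  moreover have "e \<in> K_betaN" using e(1) R(5) unfolding S_def by blast
  moreover have "occurrences w u \<in> e"
    using occ occurrences_in_uf_iff[OF up fin] occurrences_in_uf_iff[OF ue(2) fin] ew by simp
  ultimately show ?thesis unfolding central_def minimal_idempotent_def by blast
qed

section \<open>IP-sets and idempotent ultrafilters\<close>

definition finite_sums :: "(nat \<Rightarrow> nat) \<Rightarrow> nat \<Rightarrow> nat set" where
  "finite_sums x m = {(\<Sum>n\<in>F. x n) | F. finite F \<and> F \<noteq> {} \<and> F \<subseteq> {m..}}"

lemma finite_sums_antimono: "m \<le> m' \<Longrightarrow> finite_sums x m' \<subseteq> finite_sums x m"
  unfolding finite_sums_def by fastforce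

lemma finite_sums_nonempty: "finite_sums x m \<noteq> {}"
proof -
  have "(\<Sum>n\<in>{m}. x n) \<in> finite_sums x m" unfolding finite_sums_def by blast
  then show ?thesis by blast
qed

lemma finite_sums_subset_atLeast:
  assumes "strict_mono x"
  shows "finite_sums x m \<subseteq> {m..}"
proof
  fix a assume "a \<in> finite_sums x m"
  then obtain F where F: "finite F" "F \<noteq> {}" "F \<subseteq> {m..}" "a = (\<Sum>n\<in>F. x n)"
    unfolding finite_sums_def by blast
  then obtain j where j: "j \<in> F" by blast
  have "m \<le> j" using j F(3) by auto
  also have "j \<le> x j" using strict_mono_imp_increasing[OF assms] .
  also have "x j \<le> a" using member_le_sum[OF j, of x] F(1,4) by simp
  finally show "a \<in> {m..}" by simp
qed

text \<open>Finite sums over indices beyond \<open>max F\<close> can be added to the sum over \<open>F\<close>.\<close>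

lemma finite_sums_shift_set:
  assumes "n \<in> finite_sums x m"
  shows "\<exists>k. finite_sums x k \<subseteq> shift_set (finite_sums x m) n"
proof -
  obtain F where F: "finite F" "F \<noteq> {}" "F \<subseteq> {m..}" "n = (\<Sum>j\<in>F. x j)"
    using assms unfolding finite_sums_def by blast
  have "finite_sums x (Suc (Max F)) \<subseteq> shift_set (finite_sums x m) n"
  proof
    fix a assume "a \<in> finite_sums x (Suc (Max F))"
    then obtain G where G: "finite G" "G \<noteq> {}" "G \<subseteq> {Suc (Max F)..}" "a = (\<Sum>j\<in>G. x j)"
      unfolding finite_sums_def by blast
    have disj: "F \<inter> G = {}" using G(3) Max_ge[OF F(1)] by fastforce
    have "a + n = (\<Sum>j\<in>F \<union> G. x j)"
      unfolding sum.union_disjoint[OF F(1) G(1) disj] F(4) G(4) by (rule add.commute)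
    moreover have "F \<union> G \<subseteq> {m..}" using F(3) G(3) Max_in[OF F(1,2)] by fastforce
    ultimately have "a + n \<in> finite_sums x m" unfolding finite_sums_def using F(1,2) G(1) by blast
    then show "a \<in> shift_set (finite_sums x m) n" unfolding shift_set_def by simp
  qed
  then show ?thesis by blast
qed

lemma finite_sums_in_ultrafilter: "\<exists>q\<in>betaN. range (finite_sums x) \<subseteq> q"
  using decreasing_sets_in_ultrafilter[of "finite_sums x", OF finite_sums_antimono finite_sums_nonempty]
  by (simp add: betaN_def)

lemma finite_sums_in_uf_add:
  assumes p: "is_ultrafilter p" "range (finite_sums x) \<subseteq> p"
    and q: "is_ultrafilter q" "range (finite_sums x) \<subseteq> q"
  shows "range (finite_sums x) \<subseteq> p \<oplus>\<^sub>\<beta> q"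
proof (rule image_subsetI)
  fix m
  have "finite_sums x m \<subseteq> {n. shift_set (finite_sums x m) n \<in> p}"
    using finite_sums_shift_set uf_mono[OF p(1)] p(2) by blast
  then show "finite_sums x m \<in> p \<oplus>\<^sub>\<beta> q" unfolding uf_add_iff using uf_mono[OF q(1)] q(2) by blast
qed

lemma IP_set_in_idempotent:
  assumes "IP_set A"
  shows "\<exists>p. idempotent p \<and> A \<in> p"
proof -
  obtain x :: "nat \<Rightarrow> nat" where x: "strict_mono x"
    and sums: "\<forall>F. finite F \<and> F \<noteq> {} \<longrightarrow> (\<Sum>n\<in>F. x n) \<in> A"
    using assms unfolding IP_set_def by blast
  define T where "T = {q \<in> betaN. range (finite_sums x) \<subseteq> q}"
  have "uf_closed T" "T \<noteq> {}" "\<forall>p\<in>T. \<forall>q\<in>T. p \<oplus>\<^sub>\<beta> q \<in> T"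
    unfolding T_def using uf_closed_containing finite_sums_in_ultrafilter
      finite_sums_in_uf_add is_ultrafilter_uf_add by (auto simp: betaN_def)
  then obtain e where e: "e \<in> T" "e \<oplus>\<^sub>\<beta> e = e" using idempotent_in_closed_subsemigroup by blast
  then have ue: "is_ultrafilter e" and fs: "\<And>m. finite_sums x m \<in> e"
    unfolding T_def betaN_def by auto
  have "\<not> principal e"
    unfolding nonprincipal_iff_tails[OF ue]
    using uf_mono[OF ue fs finite_sums_subset_atLeast[OF x]] by blast
  moreover have "finite_sums x 0 \<subseteq> A" using sums unfolding finite_sums_def by auto
  then have "A \<in> e" using uf_mono[OF ue fs] by blast
  ultimately show ?thesis using e(2) ue unfolding idempotent_def betaN_def by blast
qed

text \<open>Hindman and Strauss' \<open>X\<^sup>\<star>\<close>: the points of \<open>X\<close> from which \<open>X\<close> is returned to \<open>p\<close>-often.\<close>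

definition star :: "nat set set \<Rightarrow> nat set \<Rightarrow> nat set" where
  "star p X = {n \<in> X. shift_set X n \<in> p}"

lemma star_subset: "star p X \<subseteq> X"
  unfolding star_def by auto

lemma star_mem:
  assumes p: "is_ultrafilter p" and idem: "p \<oplus>\<^sub>\<beta> p = p" and X: "X \<in> p"
  shows "star p X \<in> p"
proof -
  have "{n. shift_set X n \<in> p} \<in> p" using X idem uf_add_iff by metis
  then have "X \<inter> {n. shift_set X n \<in> p} \<in> p" using uf_Int[OF p] X by simp
  moreover have "star p X = X \<inter> {n. shift_set X n \<in> p}" unfolding star_def by auto
  ultimately show ?thesis by simp
qed

lemma shift_set_star_mem:
  assumes p: "is_ultrafilter p" and idem: "p \<oplus>\<^sub>\<beta> p = p" and n: "n \<in> star p X"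
  shows "shift_set (star p X) n \<in> p"
proof -
  have "shift_set (star p X) n = star p (shift_set X n)"
    unfolding star_def shift_set_def by (auto simp: add.assoc)
  moreover have "shift_set X n \<in> p" using n unfolding star_def by simp
  ultimately show ?thesis using star_mem[OF p idem] by simp
qed

lemma finite_sums_in_descending_sets:
  assumes x: "\<And>k. x k \<in> C k" and step: "\<And>k. C (Suc k) \<subseteq> C k \<inter> shift_set (C k) (x k)"
    and F: "finite F" "F \<noteq> {}" "F \<subseteq> {k..}"
  shows "(\<Sum>n\<in>F. x n) \<in> C k"
  using F
proof (induction F arbitrary: k rule: finite_linorder_min_induct)
  case empty
  then show ?case by simp
next
  case (insert b A)
  have "C (Suc n) \<subseteq> C n" for n using step[of n] by simp
  moreover have "k \<le> b" using insert.prems(2) by simp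
  ultimately have "C b \<subseteq> C k" by (rule lift_Suc_antimono_le)
  moreover have "(\<Sum>n\<in>insert b A. x n) \<in> C b"
  proof (cases "A = {}")
    case True
    then show ?thesis using x by simp
  next
    case False
    have "A \<subseteq> {Suc b..}" using insert.hyps(2) by auto
    then have "(\<Sum>n\<in>A. x n) \<in> C (Suc b)" using insert.IH False by blast
    then have "(\<Sum>n\<in>A. x n) \<in> shift_set (C b) (x b)" using step by blast
    moreover have "b \<notin> A" using insert.hyps(2) by blast
    ultimately show ?thesis using insert.hyps(1) by (simp add: shift_set_def add.commute)
  qed
  ultimately show ?case by blast
qed

primrec galvin_glazer_seq :: "nat set set \<Rightarrow> nat set \<Rightarrow> nat \<Rightarrow> nat set \<times> nat" where
  "galvin_glazer_seq p A 0 = (star p A, SOME y. y \<in> star p A)"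
| "galvin_glazer_seq p A (Suc k) =
    (let (C, x) = galvin_glazer_seq p A k; C' = star p (C \<inter> shift_set C x)
     in (C', SOME y. y \<in> C' \<and> x < y))"

lemma idempotent_member_IP_set:
  assumes "idempotent p" and A: "A \<in> p"
  shows "IP_set A"
proof -
  have p: "is_ultrafilter p" and np: "\<not> principal p" and idem: "p \<oplus>\<^sub>\<beta> p = p"
    using assms(1) unfolding idempotent_def betaN_def by auto
  define C where "C k = fst (galvin_glazer_seq p A k)" for k
  define x where "x k = snd (galvin_glazer_seq p A k)" for k
  have C_Suc: "C (Suc k) = star p (C k \<inter> shift_set (C k) (x k))" for k
    unfolding C_def x_def by (simp add: case_prod_beta Let_def)
  have x_Suc: "x (Suc k) = (SOME y. y \<in> C (Suc k) \<and> x k < y)" for k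
    unfolding C_def x_def by (simp add: case_prod_beta Let_def)
  have above: "\<exists>y. y \<in> X \<and> a < y" if "X \<in> p" for X a
    using nonprincipal_uf_unbounded[OF p np that] by blast
  have C_x: "C k \<in> p \<and> x k \<in> C k \<and> (\<exists>X. C k = star p X)" for k
  proof (induction k)
    case 0
    have "star p A \<in> p" using star_mem[OF p idem A] .
    moreover from this have "(SOME y. y \<in> star p A) \<in> star p A"
      using uf_nonempty[OF p] by (simp add: some_in_eq)
    ultimately show ?case unfolding C_def x_def by auto
  next
    case (Suc k)
    then have "shift_set (C k) (x k) \<in> p" using shift_set_star_mem[OF p idem] by metis
    then have "C (Suc k) \<in> p" unfolding C_Suc using Suc star_mem[OF p idem] uf_Int[OF p] by simp
    moreover from this have "x (Suc k) \<in> C (Suc k)"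
      unfolding x_Suc using above by (metis (no_types, lifting) someI_ex)
    ultimately show ?case using C_Suc by blast
  qed
  have "x k < x (Suc k)" for k
    unfolding x_Suc using above C_x by (metis (no_types, lifting) someI_ex)
  then have "strict_mono x" unfolding strict_mono_Suc_iff by blast
  moreover have "(\<Sum>n\<in>F. x n) \<in> A" if "finite F" "F \<noteq> {}" for F
  proof -
    have "C (Suc k) \<subseteq> C k \<inter> shift_set (C k) (x k)" for k
      unfolding C_Suc by (rule star_subset)
    then have "(\<Sum>n\<in>F. x n) \<in> C 0"
      using finite_sums_in_descending_sets[of x C F 0] C_x that by blast
    moreover have "C 0 \<subseteq> A" unfolding C_def using star_subset by simp
    ultimately show ?thesis by blast
  qed
  ultimately show ?thesis unfolding IP_set_def by blast
qed

theorem theorem3: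
  fixes Alph :: "'a set" and w :: "nat \<Rightarrow> 'a" and u :: "'a list"
  assumes "finite Alph" and "Alph \<noteq> {}"
    and "\<forall>n. w n \<in> Alph"
    and "uniformly_recurrent w"
    and "u \<noteq> []" and "set u \<subseteq> Alph"
  shows "IP_set (occurrences w u) \<longleftrightarrow> central (occurrences w u)"
proof
  assume "IP_set (occurrences w u)"
  then obtain p where "idempotent p" "occurrences w u \<in> p"
    using IP_set_in_idempotent by blast
  moreover have "finite (range w)" using assms(1,3) by (metis finite_subset image_subset_iff)
  ultimately show "central (occurrences w u)"
    using uniformly_recurrent_occurrences_central assms(4) by blast
next
  assume "central (occurrences w u)"
  then obtain p where "idempotent p" "occurrences w u \<in> p"
    unfolding central_def minimal_idempotent_def by blast
  then show "IP_set (occurrences w u)" by (rule idempotent_member_IP_set)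
qed

end
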